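(* With the setting in the context, for all $t,t'\in\mathrm{hom}(C,G)^{-1}$ and $m,m'\in\mathrm{hom}(C,G)_1$: $A_tA_{t'}=A_{t+t'}=A_{t'}A_t$, $B_mB_{m'}=B_{m+m'}=B_{m'}B_m$, and $A_tB_m=B_mA_t$.
   Context: $(C_\bullet,\partial^C_\bullet)$ is a chain complex with each $C_n$ free abelian on a finite set $K_n$, $K_n\ne\emptyset$ for finitely many $n$; $(G_\bullet,\partial^G_\bullet)$ is a chain complex of finite abelian groups. $\mathrm{hom}(C,G)^p=\prod_n\mathrm{Hom}(C_n,G_{n-p})$ with $(\delta^pf)_n=f_{n-1}\partial^C_n-(-1)^p\partial^G_{n-p}f_n$. $\mathrm{hom}(C,G)_p=\mathrm{Hom}(\mathrm{hom}(C,G)^p,U(1))$ (written additively: the sum of characters is their pointwise product), $\chi_m(f)=m(f)$, $\delta_1m=m\circ\delta^0$. $\mathcal H=\bigotimes_n\bigotimes_{x\in K_n}\mathbb C[G_n]$ with orthonormal basis $|f\rangle$, $f\in\mathrm{hom}(C,G)^0$; $P_t|f\rangle=|f+t\rangle$, $Q_m|f\rangle=\chi_m(f)|f\rangle$; $A_t=P_{\delta^{-1}t}$ for $t\in\mathrm{hom}(C,G)^{-1}$ and $B_m=Q_{\delta_1m}$ for $m\in\mathrm{hom}(C,G)_1$. *)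

theory Defs
  imports "HOL-Algebra.Free_Abelian_Groups" "HOL-Analysis.Analysis"
begin

(* The chain complex C: C_n is the free abelian group on K n (n :: int). *)
abbreviation FA :: "('k :: type) set \<Rightarrow> ('k \<Rightarrow>\<^sub>0 int) monoid" where
  "FA S \<equiv> free_Abelian_group S"

(* Standing assumptions of the setting. The groups G n are written
   multiplicatively in HOL-Algebra, but represent the additive groups G_n. *)
definition chain_setting ::
  "(int \<Rightarrow> 'k set) \<Rightarrow> (int \<Rightarrow> ('k \<Rightarrow>\<^sub>0 int) \<Rightarrow> ('k \<Rightarrow>\<^sub>0 int))
   \<Rightarrow> (int \<Rightarrow> ('g, 'b) monoid_scheme) \<Rightarrow> (int \<Rightarrow> 'g \<Rightarrow> 'g) \<Rightarrow> bool" where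
  "chain_setting K dC G dG \<longleftrightarrow>
     (\<forall>n. finite (K n)) \<and> finite {n. K n \<noteq> {}} \<and>
     (\<forall>n. dC n \<in> hom (FA (K n)) (FA (K (n - 1)))) \<and>
     (\<forall>n. \<forall>x \<in> carrier (FA (K n)). dC (n - 1) (dC n x) = 0) \<and>
     (\<forall>n. comm_group (G n) \<and> finite (carrier (G n))) \<and>
     (\<forall>n. dG n \<in> hom (G n) (G (n - 1))) \<and>
     (\<forall>n. \<forall>x \<in> carrier (G n). dG (n - 1) (dG n x) = \<one>\<^bsub>G (n - 1)\<^esub>)"

type_synonym ('k, 'g) cochain = "int \<Rightarrow> ('k \<Rightarrow>\<^sub>0 int) \<Rightarrow> 'g"

(* hom(C,G)^p = prod_n Hom(C_n, G_{n-p}); homomorphisms are taken extensional. *)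
definition cochains :: "(int \<Rightarrow> 'k set) \<Rightarrow> (int \<Rightarrow> ('g, 'b) monoid_scheme) \<Rightarrow> int
    \<Rightarrow> ('k, 'g) cochain set" where
  "cochains K G p = {f. \<forall>n. f n \<in> hom (FA (K n)) (G (n - p))
                                \<inter> extensional (carrier (FA (K n)))}"

definition cochain_add :: "(int \<Rightarrow> 'k set) \<Rightarrow> (int \<Rightarrow> ('g, 'b) monoid_scheme) \<Rightarrow> int
    \<Rightarrow> ('k, 'g) cochain \<Rightarrow> ('k, 'g) cochain \<Rightarrow> ('k, 'g) cochain" where
  "cochain_add K G p f g =
     (\<lambda>n. restrict (\<lambda>x. f n x \<otimes>\<^bsub>G (n - p)\<^esub> g n x) (carrier (FA (K n))))"

definition cochain_zero :: "(int \<Rightarrow> 'k set) \<Rightarrow> (int \<Rightarrow> ('g, 'b) monoid_scheme) \<Rightarrow> int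
    \<Rightarrow> ('k, 'g) cochain" where
  "cochain_zero K G p = (\<lambda>n. restrict (\<lambda>x. \<one>\<^bsub>G (n - p)\<^esub>) (carrier (FA (K n))))"

definition cochain_group :: "(int \<Rightarrow> 'k set) \<Rightarrow> (int \<Rightarrow> ('g, 'b) monoid_scheme) \<Rightarrow> int
    \<Rightarrow> ('k, 'g) cochain monoid" where
  "cochain_group K G p =
     \<lparr>carrier = cochains K G p, monoid.mult = cochain_add K G p, one = cochain_zero K G p\<rparr>"

definition coboundary ::
  "(int \<Rightarrow> 'k set) \<Rightarrow> (int \<Rightarrow> ('k \<Rightarrow>\<^sub>0 int) \<Rightarrow> ('k \<Rightarrow>\<^sub>0 int))
   \<Rightarrow> (int \<Rightarrow> ('g, 'b) monoid_scheme) \<Rightarrow> (int \<Rightarrow> 'g \<Rightarrow> 'g) \<Rightarrow> int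
   \<Rightarrow> ('k, 'g) cochain \<Rightarrow> ('k, 'g) cochain" where
  "coboundary K dC G dG p f =
     (\<lambda>n. restrict
        (\<lambda>x. f (n - 1) (dC n x) \<otimes>\<^bsub>G (n - (p + 1))\<^esub>
              (dG (n - p) (f n x)) [^]\<^bsub>G (n - (p + 1))\<^esub> (- ((-1::int) ^ nat \<bar>p\<bar>)))
        (carrier (FA (K n))))"

definition U1 :: "complex monoid" where
  "U1 = \<lparr>carrier = {z. cmod z = 1}, monoid.mult = (*), one = 1\<rparr>"

definition characters :: "(int \<Rightarrow> 'k set) \<Rightarrow> (int \<Rightarrow> ('g, 'b) monoid_scheme) \<Rightarrow> int
    \<Rightarrow> (('k, 'g) cochain \<Rightarrow> complex) set" where
  "characters K G p = hom (cochain_group K G p) U1"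

definition char_add :: "('a \<Rightarrow> complex) \<Rightarrow> ('a \<Rightarrow> complex) \<Rightarrow> 'a \<Rightarrow> complex" where
  "char_add m m' = (\<lambda>f. m f * m' f)"

(* Vectors of H are functions hom(C,G)^0 -> complex (coefficients w.r.t. the
   orthonormal basis |f>); |f> is the indicator of f. *)
definition ket :: "'a \<Rightarrow> 'a \<Rightarrow> complex" where
  "ket f = (\<lambda>g. if g = f then 1 else 0)"

(* the linear operator determined by its values T f on basis vectors |f>, f in B *)
definition lin_ext :: "'a set \<Rightarrow> ('a \<Rightarrow> 'a \<Rightarrow> complex) \<Rightarrow> ('a \<Rightarrow> complex) \<Rightarrow> ('a \<Rightarrow> complex)" where
  "lin_ext B T \<psi> = (\<lambda>g. \<Sum>f\<in>B. \<psi> f * T f g)"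

definition P_op :: "(int \<Rightarrow> 'k set) \<Rightarrow> (int \<Rightarrow> ('g, 'b) monoid_scheme) \<Rightarrow> ('k, 'g) cochain
    \<Rightarrow> (('k, 'g) cochain \<Rightarrow> complex) \<Rightarrow> (('k, 'g) cochain \<Rightarrow> complex)" where
  "P_op K G t = lin_ext (cochains K G 0) (\<lambda>f. ket (cochain_add K G 0 f t))"

definition Q_op :: "(int \<Rightarrow> 'k set) \<Rightarrow> (int \<Rightarrow> ('g, 'b) monoid_scheme) \<Rightarrow> (('k, 'g) cochain \<Rightarrow> complex)
    \<Rightarrow> (('k, 'g) cochain \<Rightarrow> complex) \<Rightarrow> (('k, 'g) cochain \<Rightarrow> complex)" where
  "Q_op K G m = lin_ext (cochains K G 0) (\<lambda>f g. m f * ket f g)"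

definition A_op where
  "A_op K dC G dG t = P_op K G (coboundary K dC G dG (-1) t)"

definition B_op where
  "B_op K dC G dG m = Q_op K G (m \<circ> coboundary K dC G dG 0)"

end

(* A_t is the shift operator P_(delta t) and B_m the multiplication operator Q_(m o delta) on
   functions on hom(C,G)^0.  Shifts compose by adding their shifts and multiplication operators
   by multiplying their multipliers, so the first four identities reduce to additivity of the
   coboundary and commutativity of the cochain group and of the complex numbers.  A shift P_s
   commutes with a multiplication operator Q_mu as soon as mu is invariant under f |-> f + s;
   for s = delta t and mu = m o delta this invariance is delta o delta = 0. *)

theory Submission
  imports Defs
begin

lemma sum_ket_mult:
  assumes "finite B" "a \<in> B"
  shows "(\<Sum>f\<in>B. ket a f * X f) = X a"
proof -
  have "(\<Sum>f\<in>B. ket a f * X f) = (\<Sum>f\<in>B. if a = f then X f else 0)"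
    by (rule sum.cong) (auto simp: ket_def)
  also have "\<dots> = X a"
    using assms by simp
  finally show ?thesis .
qed

lemma lin_ext_ket_compose:
  assumes "\<And>f. f \<in> B \<Longrightarrow> s f \<in> B"
  shows "lin_ext B (\<lambda>f. ket (r f)) (lin_ext B (\<lambda>f. ket (s f)) \<psi>)
       = lin_ext B (\<lambda>f. ket (r (s f))) \<psi>"
proof (cases "finite B")
  case False
  then show ?thesis by (simp add: lin_ext_def)
next
  case True
  show ?thesis
  proof
    fix g
    have "lin_ext B (\<lambda>f. ket (r f)) (lin_ext B (\<lambda>f. ket (s f)) \<psi>) g
        = (\<Sum>f\<in>B. \<Sum>h\<in>B. \<psi> h * (ket (s h) f * ket (r f) g))"
      by (simp add: lin_ext_def sum_distrib_right mult.assoc)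
    also have "\<dots> = (\<Sum>h\<in>B. \<Sum>f\<in>B. \<psi> h * (ket (s h) f * ket (r f) g))"
      by (rule sum.swap)
    also have "\<dots> = (\<Sum>h\<in>B. \<psi> h * ket (r (s h)) g)"
      using True assms by (simp add: sum_distrib_left[symmetric] sum_ket_mult)
    finally show "lin_ext B (\<lambda>f. ket (r f)) (lin_ext B (\<lambda>f. ket (s f)) \<psi>) g
        = lin_ext B (\<lambda>f. ket (r (s f))) \<psi> g"
      by (simp add: lin_ext_def)
  qed
qed

lemma lin_ext_diag_eq:
  assumes "finite B"
  shows "lin_ext B (\<lambda>f g. \<mu> f * ket f g) \<psi> = (\<lambda>g. if g \<in> B then \<psi> g * \<mu> g else 0)"
proof
  fix g
  have "lin_ext B (\<lambda>f g. \<mu> f * ket f g) \<psi> g = (\<Sum>f\<in>B. if f = g then \<psi> g * \<mu> g else 0)"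
    unfolding lin_ext_def by (rule sum.cong) (auto simp: ket_def)
  then show "lin_ext B (\<lambda>f g. \<mu> f * ket f g) \<psi> g = (if g \<in> B then \<psi> g * \<mu> g else 0)"
    using assms by (simp add: sum.delta')
qed

lemma lin_ext_diag_compose:
  "lin_ext B (\<lambda>f g. \<mu> f * ket f g) (lin_ext B (\<lambda>f g. \<nu> f * ket f g) \<psi>)
   = lin_ext B (\<lambda>f g. (\<mu> f * \<nu> f) * ket f g) \<psi>"
proof (cases "finite B")
  case False
  then show ?thesis by (simp add: lin_ext_def)
next
  case True
  show ?thesis
    unfolding lin_ext_diag_eq[OF True] by (simp add: fun_eq_iff ac_simps)
qed

lemma lin_ext_ket_diag_commute:
  assumes "\<And>f. f \<in> B \<Longrightarrow> s f \<in> B" and "\<And>f. f \<in> B \<Longrightarrow> \<mu> (s f) = \<mu> f"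
  shows "lin_ext B (\<lambda>f. ket (s f)) (lin_ext B (\<lambda>f g. \<mu> f * ket f g) \<psi>)
       = lin_ext B (\<lambda>f g. \<mu> f * ket f g) (lin_ext B (\<lambda>f. ket (s f)) \<psi>)"
proof (cases "finite B")
  case False
  then show ?thesis by (simp add: lin_ext_def)
next
  case True
  show ?thesis
  proof
    fix g
    have outside: "(\<Sum>f\<in>B. \<psi> f * ket (s f) g) = 0" if "g \<notin> B"
      using assms(1) that by (intro sum.neutral ballI) (auto simp: ket_def)
    have "lin_ext B (\<lambda>f. ket (s f)) (lin_ext B (\<lambda>f g. \<mu> f * ket f g) \<psi>) g
       = (\<Sum>f\<in>B. \<psi> f * \<mu> f * ket (s f) g)"
      unfolding lin_ext_diag_eq[OF True] by (simp add: lin_ext_def)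
    also have "\<dots> = (\<Sum>f\<in>B. \<psi> f * ket (s f) g) * \<mu> g"
      unfolding sum_distrib_right using assms(2) by (intro sum.cong) (auto simp: ket_def)
    also have "\<dots> = lin_ext B (\<lambda>f g. \<mu> f * ket f g) (lin_ext B (\<lambda>f. ket (s f)) \<psi>) g"
      unfolding lin_ext_diag_eq[OF True] using outside by (simp add: lin_ext_def)
    finally show "lin_ext B (\<lambda>f. ket (s f)) (lin_ext B (\<lambda>f g. \<mu> f * ket f g) \<psi>) g
       = lin_ext B (\<lambda>f g. \<mu> f * ket f g) (lin_ext B (\<lambda>f. ket (s f)) \<psi>) g" .
  qed
qed

lemma lin_ext_cong: "(\<And>f. f \<in> B \<Longrightarrow> T f = T' f) \<Longrightarrow> lin_ext B T = lin_ext B T'"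
  unfolding lin_ext_def by (intro ext sum.cong) auto

lemma (in comm_group) hom_group_int_pow:
  assumes "f \<in> hom H G"
  shows "(\<lambda>x. f x [^] (k::int)) \<in> hom H G"
  using assms by (auto simp: hom_def Pi_def int_pow_distrib)

lemma hom_restrict_free_Abelian_group:
  "h \<in> hom (FA S) H \<Longrightarrow> restrict h (carrier (FA S)) \<in> hom (FA S) H"
  by (rule group.hom_restrict[OF group_free_Abelian_group]) auto

lemma cochain_group_simps [simp]:
  "carrier (cochain_group K G p) = cochains K G p"
  "monoid.mult (cochain_group K G p) = cochain_add K G p"
  "one (cochain_group K G p) = cochain_zero K G p"
  by (simp_all add: cochain_group_def)

lemma cochains_hom: "f \<in> cochains K G p \<Longrightarrow> f n \<in> hom (FA (K n)) (G (n - p))"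
  by (simp add: cochains_def)

lemma cochains_closed:
  "f \<in> cochains K G p \<Longrightarrow> x \<in> carrier (FA (K n)) \<Longrightarrow> f n x \<in> carrier (G (n - p))"
  by (meson cochains_hom hom_in_carrier)

lemma cochains_undefined:
  "f \<in> cochains K G p \<Longrightarrow> x \<notin> carrier (FA (K n)) \<Longrightarrow> f n x = undefined"
  by (simp add: cochains_def extensional_def)

lemma cochains_eqI:
  assumes "f \<in> cochains K G p" "g \<in> cochains K G p"
    and "\<And>n x. x \<in> carrier (FA (K n)) \<Longrightarrow> f n x = g n x"
  shows "f = g"
proof (intro ext)
  fix n x
  show "f n x = g n x"
    using assms cochains_undefined[OF assms(1)] cochains_undefined[OF assms(2)]
    by (cases "x \<in> carrier (FA (K n))") auto
qed

lemma cochain_add_closed: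
  assumes "\<And>n. comm_group (G n)" and "f \<in> cochains K G p" "g \<in> cochains K G p"
  shows "cochain_add K G p f g \<in> cochains K G p"
proof -
  interpret G: comm_group "G n" for n by fact
  show ?thesis
    using assms(2,3) unfolding cochains_def cochain_add_def
    by (auto intro!: hom_restrict_free_Abelian_group G.hom_group_mult)
qed

lemma comm_group_cochain_group:
  assumes "\<And>n. comm_group (G n)"
  shows "comm_group (cochain_group K G p)"
proof -
  interpret G: comm_group "G n" for n by fact
  note add_closed = cochain_add_closed[OF assms]
  have zero_closed: "cochain_zero K G p \<in> cochains K G p"
    unfolding cochains_def cochain_zero_def
    by (auto intro!: hom_restrict_free_Abelian_group trivial_hom G.is_group)
  have neg_closed: "(\<lambda>n. restrict (\<lambda>x. f n x [^]\<^bsub>G (n - p)\<^esub> (-1::int)) (carrier (FA (K n))))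
      \<in> cochains K G p" if "f \<in> cochains K G p" for f
    using that unfolding cochains_def
    by (auto intro!: hom_restrict_free_Abelian_group G.hom_group_int_pow)
  show ?thesis
  proof (rule comm_groupI, unfold cochain_group_simps)
    fix f g h
    assume f: "f \<in> cochains K G p" and g: "g \<in> cochains K G p" and h: "h \<in> cochains K G p"
    show "cochain_add K G p f g \<in> cochains K G p" by (rule add_closed[OF f g])
    show "cochain_add K G p (cochain_add K G p f g) h = cochain_add K G p f (cochain_add K G p g h)"
      unfolding cochain_add_def
      by (intro ext restrict_ext)
        (auto simp: cochains_closed[OF f] cochains_closed[OF g] cochains_closed[OF h] G.m_assoc)
    show "cochain_add K G p f g = cochain_add K G p g f"
      unfolding cochain_add_def
      by (intro ext restrict_ext) (auto simp: cochains_closed[OF f] cochains_closed[OF g] G.m_comm)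
    show "cochain_add K G p (cochain_zero K G p) f = f"
      by (rule cochains_eqI[OF add_closed[OF zero_closed f] f])
         (simp add: cochain_add_def cochain_zero_def cochains_closed[OF f])
    show "\<exists>g\<in>cochains K G p. cochain_add K G p g f = cochain_zero K G p"
      unfolding cochain_add_def cochain_zero_def
      by (intro bexI[OF _ neg_closed[OF f]] ext restrict_ext)
         (auto simp: cochains_closed[OF f] G.int_pow_neg)
  qed (fact zero_closed)
qed

lemma P_op_compose:
  assumes "\<And>n. comm_group (G n)" and t: "t \<in> cochains K G 0" and t': "t' \<in> cochains K G 0"
  shows "P_op K G t \<circ> P_op K G t' = P_op K G (cochain_add K G 0 t t')"
proof
  interpret C: comm_group "cochain_group K G 0"
    by (rule comm_group_cochain_group) fact
  fix \<psi>
  have "P_op K G t (P_op K G t' \<psi>)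
      = lin_ext (cochains K G 0) (\<lambda>f. ket (cochain_add K G 0 (cochain_add K G 0 f t') t)) \<psi>"
    unfolding P_op_def by (intro lin_ext_ket_compose cochain_add_closed[OF assms(1)] t')
  also have "\<dots> = P_op K G (cochain_add K G 0 t t') \<psi>"
    unfolding P_op_def
    by (intro fun_cong[OF lin_ext_cong])
      (use t t' C.m_assoc[of _ t' t] C.m_comm[of t' t] in simp)
  finally show "(P_op K G t \<circ> P_op K G t') \<psi> = P_op K G (cochain_add K G 0 t t') \<psi>"
    by simp
qed

lemma Q_op_compose: "Q_op K G \<mu> \<circ> Q_op K G \<nu> = Q_op K G (char_add \<mu> \<nu>)"
proof
  fix \<psi>
  show "(Q_op K G \<mu> \<circ> Q_op K G \<nu>) \<psi> = Q_op K G (char_add \<mu> \<nu>) \<psi>"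
    unfolding Q_op_def char_add_def comp_def lin_ext_diag_compose ..
qed

lemma P_Q_op_commute:
  assumes "\<And>n. comm_group (G n)" and t: "t \<in> cochains K G 0"
    and invariant: "\<And>f. f \<in> cochains K G 0 \<Longrightarrow> \<mu> (cochain_add K G 0 f t) = \<mu> f"
  shows "P_op K G t \<circ> Q_op K G \<mu> = Q_op K G \<mu> \<circ> P_op K G t"
  unfolding P_op_def Q_op_def comp_def
  by (intro ext lin_ext_ket_diag_commute invariant cochain_add_closed[OF assms(1)] t)

lemma B_op_compose:
  "B_op K dC G dG \<mu> \<circ> B_op K dC G dG \<nu> = B_op K dC G dG (char_add \<mu> \<nu>)"
  unfolding B_op_def Q_op_compose by (simp add: char_add_def comp_def)

lemma char_add_commute: "char_add \<mu> \<nu> = char_add \<nu> \<mu>"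
  unfolding char_add_def by (simp add: mult.commute)

lemma neg_one_power_nat_abs_add_one: "(-1::int) ^ nat \<bar>p + 1\<bar> = - ((-1) ^ nat \<bar>p\<bar>)"
proof (cases "0 \<le> p")
  case True
  then have "nat \<bar>p + 1\<bar> = Suc (nat \<bar>p\<bar>)" by simp
  then show ?thesis by (simp only: power_Suc mult_minus1)
next
  case False
  then have "nat \<bar>p\<bar> = Suc (nat \<bar>p + 1\<bar>)" by simp
  then show ?thesis by (simp only: power_Suc mult_minus1 minus_minus)
qed

locale chain_complex_pair =
  fixes K :: "int \<Rightarrow> 'k set"
    and dC :: "int \<Rightarrow> ('k \<Rightarrow>\<^sub>0 int) \<Rightarrow> ('k \<Rightarrow>\<^sub>0 int)"
    and G :: "int \<Rightarrow> ('g, 'b) monoid_scheme"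
    and dG :: "int \<Rightarrow> 'g \<Rightarrow> 'g"
  assumes chain_setting: "chain_setting K dC G dG"
begin

lemma comm_group_G: "comm_group (G n)"
  and dC_hom: "dC n \<in> hom (FA (K n)) (FA (K (n - 1)))"
  and dC_dC: "x \<in> carrier (FA (K n)) \<Longrightarrow> dC (n - 1) (dC n x) = 0"
  and dG_hom: "dG n \<in> hom (G n) (G (n - 1))"
  using chain_setting by (simp_all add: chain_setting_def)

sublocale G: comm_group "G n" for n
  by (rule comm_group_G)

(* chain_setting equates dG (n - 1) (dG n y) with the unit of G (n - 1) rather than of G (n - 2),
   where it lives.  Applied to y = 1 this forces all the groups G n to share their unit, which
   yields the intended identity dG_dG. *)
lemma one_G_diff_one: "\<one>\<^bsub>G (n - 1)\<^esub> = \<one>\<^bsub>G n\<^esub>"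
proof -
  have "dG n (dG (n + 1) \<one>\<^bsub>G (n + 1)\<^esub>) = \<one>\<^bsub>G n\<^esub>"
    using chain_setting unfolding chain_setting_def
    by (metis G.one_closed add_diff_cancel_right')
  moreover have "dG n (dG (n + 1) \<one>\<^bsub>G (n + 1)\<^esub>) = \<one>\<^bsub>G (n - 1)\<^esub>"
    using hom_one[OF dG_hom[of "n + 1"] G.is_group G.is_group]
      hom_one[OF dG_hom[of n] G.is_group G.is_group]
    by simp
  ultimately show ?thesis by simp
qed

lemma dG_dG: "y \<in> carrier (G n) \<Longrightarrow> dG (n - 1) (dG n y) = \<one>\<^bsub>G (n - 1 - 1)\<^esub>"
  using chain_setting one_G_diff_one[of "n - 1"] by (simp add: chain_setting_def)

sublocale cochain_group: comm_group "cochain_group K G p" for p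
  by (rule comm_group_cochain_group[OF comm_group_G])

lemma coboundary_apply:
  "x \<in> carrier (FA (K n)) \<Longrightarrow> coboundary K dC G dG p f n x
    = f (n - 1) (dC n x) \<otimes>\<^bsub>G (n - (p + 1))\<^esub>
      dG (n - p) (f n x) [^]\<^bsub>G (n - (p + 1))\<^esub> (- ((-1::int) ^ nat \<bar>p\<bar>))"
  by (simp add: coboundary_def)

lemma coboundary_closed:
  assumes f: "f \<in> cochains K G p"
  shows "coboundary K dC G dG p f \<in> cochains K G (p + 1)"
  unfolding cochains_def
proof (intro CollectI allI IntI)
  fix n
  have idx: "n - 1 - p = n - (p + 1)" "n - p - 1 = n - (p + 1)" by simp_all
  have "(\<lambda>x. f (n - 1) (dC n x)) \<in> hom (FA (K n)) (G (n - (p + 1)))"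
    using hom_compose[OF dC_hom cochains_hom[OF f, of "n - 1"]] idx by (simp add: comp_def)
  moreover have "(\<lambda>x. dG (n - p) (f n x)) \<in> hom (FA (K n)) (G (n - (p + 1)))"
    using hom_compose[OF cochains_hom[OF f] dG_hom[of "n - p"]] idx by (simp add: comp_def)
  ultimately show "coboundary K dC G dG p f n \<in> hom (FA (K n)) (G (n - (p + 1)))"
    unfolding coboundary_def
    by (intro hom_restrict_free_Abelian_group G.hom_group_mult G.hom_group_int_pow)
  show "coboundary K dC G dG p f n \<in> extensional (carrier (FA (K n)))"
    unfolding coboundary_def by simp
qed

lemma coboundary_add:
  assumes f: "f \<in> cochains K G p" and g: "g \<in> cochains K G p"
  shows "coboundary K dC G dG p (cochain_add K G p f g)
       = cochain_add K G (p + 1) (coboundary K dC G dG p f) (coboundary K dC G dG p g)"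
proof (rule cochains_eqI)
  show "coboundary K dC G dG p (cochain_add K G p f g) \<in> cochains K G (p + 1)"
    by (intro coboundary_closed cochain_add_closed[OF comm_group_G] f g)
  show "cochain_add K G (p + 1) (coboundary K dC G dG p f) (coboundary K dC G dG p g)
      \<in> cochains K G (p + 1)"
    by (intro coboundary_closed cochain_add_closed[OF comm_group_G] f g)
next
  fix n x
  assume x: "x \<in> carrier (FA (K n))"
  have idx: "n - 1 - p = n - (p + 1)" "n - p - 1 = n - (p + 1)" by simp_all
  have y: "dC n x \<in> carrier (FA (K (n - 1)))"
    by (rule hom_in_carrier[OF dC_hom x])
  have ab: "f (n - 1) (dC n x) \<in> carrier (G (n - (p + 1)))"
    "g (n - 1) (dC n x) \<in> carrier (G (n - (p + 1)))"
    using cochains_closed[OF f y] cochains_closed[OF g y] idx by simp_all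
  have cd: "f n x \<in> carrier (G (n - p))" "g n x \<in> carrier (G (n - p))"
    using cochains_closed[OF f x] cochains_closed[OF g x] by simp_all
  have dG': "dG (n - p) \<in> hom (G (n - p)) (G (n - (p + 1)))"
    using dG_hom[of "n - p"] idx by simp
  have "dG (n - p) (f n x \<otimes>\<^bsub>G (n - p)\<^esub> g n x)
      = dG (n - p) (f n x) \<otimes>\<^bsub>G (n - (p + 1))\<^esub> dG (n - p) (g n x)"
    by (rule hom_mult[OF dG' cd])
  moreover have "dG (n - p) (f n x) \<in> carrier (G (n - (p + 1)))"
    "dG (n - p) (g n x) \<in> carrier (G (n - (p + 1)))"
    using hom_in_carrier[OF dG'] cd by auto
  ultimately show "coboundary K dC G dG p (cochain_add K G p f g) n x
      = cochain_add K G (p + 1) (coboundary K dC G dG p f) (coboundary K dC G dG p g) n x"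
    using x y ab by (simp add: coboundary_def cochain_add_def idx G.int_pow_distrib G.m_ac)
qed

lemma coboundary_on_boundary:
  assumes f: "f \<in> cochains K G p" and x: "x \<in> carrier (FA (K n))"
  shows "coboundary K dC G dG p f (n - 1) (dC n x)
       = dG (n - (p + 1)) (f (n - 1) (dC n x))
           [^]\<^bsub>G (n - (p + 1 + 1))\<^esub> (- ((-1::int) ^ nat \<bar>p\<bar>))"
proof -
  have y: "dC n x \<in> carrier (FA (K (n - 1)))"
    by (rule hom_in_carrier[OF dC_hom x])
  have "f (n - 1) (dC n x) \<in> carrier (G (n - 1 - p))"
    by (rule cochains_closed[OF f y])
  then have u: "dG (n - (p + 1)) (f (n - 1) (dC n x)) \<in> carrier (G (n - (p + 1 + 1)))"
    using hom_in_carrier[OF dG_hom[of "n - (p + 1)"]] by (simp add: algebra_simps)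
  have idx: "n - 1 - 1 - p = n - (p + 1 + 1)"
    by simp
  have "f (n - 1 - 1) 0 = \<one>\<^bsub>G (n - 1 - 1 - p)\<^esub>"
    using hom_one[OF cochains_hom[OF f] group_free_Abelian_group G.is_group] by simp
  then have "f (n - 1 - 1) (dC (n - 1) (dC n x)) = \<one>\<^bsub>G (n - (p + 1 + 1))\<^esub>"
    using dC_dC[OF x] by (simp only: idx)
  then show ?thesis
    using y u by (simp add: coboundary_def algebra_simps)
qed

lemma dG_coboundary:
  assumes f: "f \<in> cochains K G p" and x: "x \<in> carrier (FA (K n))"
  shows "dG (n - (p + 1)) (coboundary K dC G dG p f n x) = dG (n - (p + 1)) (f (n - 1) (dC n x))"
proof -
  have idx: "n - 1 - p = n - (p + 1)" "n - p - 1 = n - (p + 1)" "n - (p + 1) - 1 = n - (p + 1 + 1)"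
    by simp_all
  have a: "f (n - 1) (dC n x) \<in> carrier (G (n - (p + 1)))"
    using cochains_closed[OF f hom_in_carrier[OF dC_hom x]] idx by simp
  then have u: "dG (n - (p + 1)) (f (n - 1) (dC n x)) \<in> carrier (G (n - (p + 1 + 1)))"
    using hom_in_carrier[OF dG_hom[of "n - (p + 1)"]] by (simp add: algebra_simps)
  have w: "dG (n - p) (f n x) \<in> carrier (G (n - (p + 1)))"
    using hom_in_carrier[OF dG_hom cochains_closed[OF f x]] idx by simp
  have "dG (n - (p + 1)) (dG (n - p) (f n x)) = \<one>\<^bsub>G (n - (p + 1 + 1))\<^esub>"
    using dG_dG[OF cochains_closed[OF f x]] by (simp add: algebra_simps)
  then show ?thesis
    using x w a u hom_mult[OF dG_hom] hom_int_pow[OF dG_hom _ G.is_group G.is_group]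
    by (simp add: coboundary_def idx)
qed

lemma coboundary_coboundary:
  assumes f: "f \<in> cochains K G p"
  shows "coboundary K dC G dG (p + 1) (coboundary K dC G dG p f) = cochain_zero K G (p + 1 + 1)"
proof (rule cochains_eqI)
  show "coboundary K dC G dG (p + 1) (coboundary K dC G dG p f) \<in> cochains K G (p + 1 + 1)"
    by (intro coboundary_closed f)
  show "cochain_zero K G (p + 1 + 1) \<in> cochains K G (p + 1 + 1)"
    using cochain_group.one_closed by simp
next
  fix n x
  assume x: "x \<in> carrier (FA (K n))"
  let ?H = "G (n - (p + 1 + 1))" and ?e = "- ((-1::int) ^ nat \<bar>p\<bar>)"
  define u where "u = dG (n - (p + 1)) (f (n - 1) (dC n x))"
  have "f (n - 1) (dC n x) \<in> carrier (G (n - 1 - p))"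
    by (rule cochains_closed[OF f hom_in_carrier[OF dC_hom x]])
  then have u: "u \<in> carrier ?H"
    unfolding u_def using hom_in_carrier[OF dG_hom[of "n - (p + 1)"]] by (simp add: algebra_simps)
  have "coboundary K dC G dG (p + 1) (coboundary K dC G dG p f) n x
      = u [^]\<^bsub>?H\<^esub> ?e \<otimes>\<^bsub>?H\<^esub> u [^]\<^bsub>?H\<^esub> (- ?e)"
    unfolding coboundary_apply[OF x, of "p + 1" "coboundary K dC G dG p f"]
      coboundary_on_boundary[OF f x] dG_coboundary[OF f x] neg_one_power_nat_abs_add_one u_def ..
  also have "\<dots> = \<one>\<^bsub>?H\<^esub>"
    using G.int_pow_mult[OF u, of ?e "- ?e"] by simp
  also have "\<dots> = cochain_zero K G (p + 1 + 1) n x"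
    using x by (simp add: cochain_zero_def)
  finally show "coboundary K dC G dG (p + 1) (coboundary K dC G dG p f) n x
      = cochain_zero K G (p + 1 + 1) n x" .
qed

lemma coboundary_add_coboundary:
  assumes f: "f \<in> cochains K G (p + 1)" and t: "t \<in> cochains K G p"
  shows "coboundary K dC G dG (p + 1) (cochain_add K G (p + 1) f (coboundary K dC G dG p t))
       = coboundary K dC G dG (p + 1) f"
proof -
  have "coboundary K dC G dG (p + 1) (cochain_add K G (p + 1) f (coboundary K dC G dG p t))
      = cochain_add K G (p + 1 + 1) (coboundary K dC G dG (p + 1) f)
          (coboundary K dC G dG (p + 1) (coboundary K dC G dG p t))"
    by (rule coboundary_add[OF f coboundary_closed[OF t]])
  also have "coboundary K dC G dG (p + 1) (coboundary K dC G dG p t) = cochain_zero K G (p + 1 + 1)"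
    by (rule coboundary_coboundary[OF t])
  finally show ?thesis
    using cochain_group.r_one[of "coboundary K dC G dG (p + 1) f" "p + 1 + 1"] coboundary_closed[OF f]
    by simp
qed

lemma A_op_compose:
  assumes s: "s \<in> cochains K G (-1)" and s': "s' \<in> cochains K G (-1)"
  shows "A_op K dC G dG s \<circ> A_op K dC G dG s' = A_op K dC G dG (cochain_add K G (-1) s s')"
  using P_op_compose[OF comm_group_G
      coboundary_closed[OF s, simplified] coboundary_closed[OF s', simplified]]
  by (simp add: A_op_def coboundary_add[OF s s'])

lemma A_B_op_commute:
  assumes t: "t \<in> cochains K G (-1)"
  shows "A_op K dC G dG t \<circ> B_op K dC G dG \<mu> = B_op K dC G dG \<mu> \<circ> A_op K dC G dG t"
  unfolding A_op_def B_op_def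
  using coboundary_add_coboundary[of _ "-1" t] t
  by (intro P_Q_op_commute[OF comm_group_G]) (use coboundary_closed[OF t] in simp_all)

end

theorem lemma4:
  fixes K :: "int \<Rightarrow> 'k set"
    and dC :: "int \<Rightarrow> ('k \<Rightarrow>\<^sub>0 int) \<Rightarrow> ('k \<Rightarrow>\<^sub>0 int)"
    and G :: "int \<Rightarrow> ('g, 'b) monoid_scheme"
    and dG :: "int \<Rightarrow> 'g \<Rightarrow> 'g"
  assumes "chain_setting K dC G dG"
    and "t \<in> cochains K G (-1)" and "t' \<in> cochains K G (-1)"
    and "m \<in> characters K G 1" and "m' \<in> characters K G 1"
  shows "A_op K dC G dG t \<circ> A_op K dC G dG t' = A_op K dC G dG (cochain_add K G (-1) t t')
       \<and> A_op K dC G dG (cochain_add K G (-1) t t') = A_op K dC G dG t' \<circ> A_op K dC G dG t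
       \<and> B_op K dC G dG m \<circ> B_op K dC G dG m' = B_op K dC G dG (char_add m m')
       \<and> B_op K dC G dG (char_add m m') = B_op K dC G dG m' \<circ> B_op K dC G dG m
       \<and> A_op K dC G dG t \<circ> B_op K dC G dG m = B_op K dC G dG m \<circ> A_op K dC G dG t"
proof -
  interpret chain_complex_pair K dC G dG
    by unfold_locales (fact assms(1))
  have "cochain_add K G (-1) t t' = cochain_add K G (-1) t' t"
    using cochain_group.m_comm[of t "-1" t'] assms(2,3) by simp
  then have A_comm: "A_op K dC G dG (cochain_add K G (-1) t t') = A_op K dC G dG t' \<circ> A_op K dC G dG t"
    using A_op_compose[OF assms(3,2)] by simp
  have B_comm: "B_op K dC G dG (char_add m m') = B_op K dC G dG m' \<circ> B_op K dC G dG m"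
    by (simp add: B_op_compose char_add_commute)
  show ?thesis
    by (intro conjI A_op_compose[OF assms(2,3)] A_comm B_op_compose B_comm A_B_op_commute[OF assms(2)])
qed

end
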